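(* Let $G$ be a simple undirected graph on $n$ vertices, and let $\delta$ be the minimum vertex degree over all graphs in the LC orbit of $G$. Then $$Q(G,4)\le \frac{\gamma(\delta+1)+6^n}{2^n},\qquad\text{where}\qquad \gamma(d)=\sum_{t=0}^{n}\binom{n}{t}2^{t}\left(\sum_{k=\max(1,\,d+t-n)}^{t}\binom{t}{k}2^{\,n-k}\right).$$
   Context: All graphs are finite, simple and undirected. For a vertex $u$, $G\setminus u$ denotes $G$ with $u$ and all its incident edges removed. For a vertex $v$ with neighbourhood $N_v$ (the set of vertices adjacent to $v$), local complementation (LC) on $v$ transforms $G$ into $G*v$ by replacing the induced subgraph of $G$ on $N_v$ by its complement. For an edge $\{u,v\}$, edge local complementation is $G^{(uv)}=G*u*v*u$. The LC orbit of $G$ is the set of all graphs (up to isomorphism) obtainable from $G$ by any finite sequence of LC operations. The interlace polynomial $Q(G)=Q(G,x)$ is defined recursively: for the edgeless graph $E_n$ on $n$ vertices, $Q(E_n)=x^n$; for any other graph $G$, choose any edge $\{u,v\}$ and set $Q(G)=Q(G\setminus u)+Q(G^{(uv)}\setminus u)+Q((G*u)\setminus u)$ (this is independent of the choice of edge). *)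

theory Defs
  imports "HOL-Computational_Algebra.Polynomial"
begin

type_synonym 'a graph = "'a set \<times> 'a set set"

definition simple_graph :: "'a graph \<Rightarrow> bool" where
  "simple_graph G \<longleftrightarrow> finite (fst G) \<and> (\<forall>e\<in>snd G. e \<subseteq> fst G \<and> card e = 2)"

definition nbhd :: "'a graph \<Rightarrow> 'a \<Rightarrow> 'a set" where
  "nbhd G v = {u. {u, v} \<in> snd G}"

definition degree :: "'a graph \<Rightarrow> 'a \<Rightarrow> nat" where
  "degree G v = card (nbhd G v)"

definition lc :: "'a \<Rightarrow> 'a graph \<Rightarrow> 'a graph" where
  "lc v G = (fst G,
     (snd G - {{a, b} | a b. a \<in> nbhd G v \<and> b \<in> nbhd G v \<and> a \<noteq> b})
     \<union> ({{a, b} | a b. a \<in> nbhd G v \<and> b \<in> nbhd G v \<and> a \<noteq> b} - snd G))"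

definition elc :: "'a \<Rightarrow> 'a \<Rightarrow> 'a graph \<Rightarrow> 'a graph" where
  "elc u v G = lc u (lc v (lc u G))"

definition del :: "'a \<Rightarrow> 'a graph \<Rightarrow> 'a graph" where
  "del u G = (fst G - {u}, {e \<in> snd G. u \<notin> e})"

text \<open>LC orbit (as labelled graphs; isomorphic copies do not affect vertex degrees).\<close>
definition lc_step :: "'a graph \<Rightarrow> 'a graph \<Rightarrow> bool" where
  "lc_step G H \<longleftrightarrow> (\<exists>v\<in>fst G. H = lc v G)"

definition lc_orbit :: "'a graph \<Rightarrow> 'a graph set" where
  "lc_orbit G = {H. lc_step\<^sup>*\<^sup>* G H}"

definition min_orbit_degree :: "'a graph \<Rightarrow> nat" where
  "min_orbit_degree G = Min {degree H v | H v. H \<in> lc_orbit G \<and> v \<in> fst H}"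

text \<open>Interlace polynomial, via the recursion with an arbitrarily chosen edge
(the recursion is independent of the choice). The fuel argument is the number of
vertices, which decreases by one in each recursive call.\<close>
primrec Qf :: "nat \<Rightarrow> 'a graph \<Rightarrow> real poly" where
  "Qf 0 G = [:0, 1:] ^ card (fst G)"
| "Qf (Suc n) G =
     (if snd G = {} then [:0, 1:] ^ card (fst G)
      else (let (u, v) = (SOME (u, v). u \<noteq> v \<and> {u, v} \<in> snd G) in
            Qf n (del u G) + Qf n (del u (elc u v G)) + Qf n (del u (lc u G))))"

definition interlace :: "'a graph \<Rightarrow> real poly" where
  "interlace G = Qf (card (fst G)) G"

text \<open>gamma(d) from the statement; for natural numbers, max 1 (d + t - n) with truncated
subtraction equals max(1, d+t-n) over the integers.\<close>
definition gamma :: "nat \<Rightarrow> nat \<Rightarrow> real" where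
  "gamma n d = (\<Sum>t=0..n. real (n choose t) * 2 ^ t *
      (\<Sum>k = max 1 (d + t - n)..t. real (t choose k) * 2 ^ (n - k)))"

end

theory Submission
  imports Defs
begin

(* For a subset K of the vertex set V call a vertex i a zero of K
   if i is not in K and has an even number of neighbours in K; the other
   vertices form the support of K (the support of the vector (K, N(K) mod 2)).
   The proof has three parts.
   (1) A state sum: Q(G,4) = (SUM K <= V. 3 ^ #zeros(K)).  Local complementation
       at w induces a bijection lc_shift on subsets of V that preserves zeros,
       so the state sum satisfies the defining recursion of Q; by induction on
       the number of vertices it agrees with Q(G,4).
   (2) A weight bound: every nonempty K has at least delta+1 support vertices,
       delta the minimum degree over the LC orbit.  By induction on |K|, LC moves
       (which only permute subsets, keeping supports) shrink K until some vertex
       of K has its whole closed neighbourhood inside the support.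
   (3) Counting: expand 3^z = (SUM U <= Z. 2^|U|), regroup the pairs (K, U) by
       S = K \<union> U, and bound each term using (2); the result is
       3^n + gamma(delta+1)/2^n = (gamma(delta+1) + 6^n)/2^n. *)

lemma fst_lc [simp]: "fst (lc w H) = fst H"
  by (simp add: lc_def)

lemma fst_elc [simp]: "fst (elc u v H) = fst H"
  by (simp add: elc_def)

lemma fst_del [simp]: "fst (del u H) = fst H - {u}"
  by (simp add: del_def)

lemma nbhd_sym: "x \<in> nbhd H y \<longleftrightarrow> y \<in> nbhd H x"
  by (simp add: nbhd_def insert_commute)

lemma simple_finite: "simple_graph H \<Longrightarrow> finite (fst H)"
  by (simp add: simple_graph_def)

lemma simple_nbhd: "simple_graph H \<Longrightarrow> nbhd H x \<subseteq> fst H"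
  unfolding simple_graph_def nbhd_def by auto

lemma simple_not_self: "simple_graph H \<Longrightarrow> x \<notin> nbhd H x"
  unfolding simple_graph_def nbhd_def by fastforce

lemma simple_finite_nbhd: "simple_graph H \<Longrightarrow> finite (nbhd H x)"
  using simple_nbhd simple_finite finite_subset by metis

lemma nbhd_lc:
  "nbhd (lc w H) i =
     (if i \<in> nbhd H w then sym_diff (nbhd H i) (nbhd H w - {i}) else nbhd H i)"
proof -
  define P where "P = {{a, b} | a b. a \<in> nbhd H w \<and> b \<in> nbhd H w \<and> a \<noteq> b}"
  have edges: "snd (lc w H) = sym_diff (snd H) P"
    unfolding lc_def P_def by simp
  have "{x, i} \<in> P \<longleftrightarrow> x \<noteq> i \<and> x \<in> nbhd H w \<and> i \<in> nbhd H w" for x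
    unfolding P_def by (auto simp: doubleton_eq_iff)
  then show ?thesis
    unfolding nbhd_def edges by (auto simp: nbhd_def)
qed

lemma nbhd_lc_self: "simple_graph H \<Longrightarrow> nbhd (lc w H) w = nbhd H w"
  using simple_not_self[of H w] by (simp add: nbhd_lc)

lemma nbhd_del: "i \<noteq> u \<Longrightarrow> nbhd (del u H) i = nbhd H i - {u}"
  unfolding nbhd_def del_def by auto

lemma simple_lc: "simple_graph H \<Longrightarrow> simple_graph (lc w H)"
  using simple_nbhd[of H w] unfolding simple_graph_def lc_def
  by (auto simp: card_insert_if)

lemma simple_elc: "simple_graph H \<Longrightarrow> simple_graph (elc u v H)"
  unfolding elc_def by (intro simple_lc)

lemma simple_del: "simple_graph H \<Longrightarrow> simple_graph (del u H)"
  unfolding simple_graph_def del_def by auto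

lemma orbit_simple:
  assumes "lc_step\<^sup>*\<^sup>* G H" "simple_graph G"
  shows "simple_graph H \<and> fst H = fst G"
  using assms
proof (induction rule: rtranclp_induct)
  case (step H H')
  then obtain v where "H' = lc v H" unfolding lc_step_def by blast
  with step show ?case using simple_lc[of H v] by simp
qed simp

lemma min_orbit_degree_le:
  assumes sG: "simple_graph G" and "lc_step\<^sup>*\<^sup>* G H" "w \<in> fst H"
  shows "min_orbit_degree G \<le> degree H w"
proof -
  let ?D = "{degree H v | H v. H \<in> lc_orbit G \<and> v \<in> fst H}"
  have "?D \<subseteq> {..card (fst G)}"
  proof
    fix x assume "x \<in> ?D"
    then obtain H' v where x: "x = degree H' v" "lc_step\<^sup>*\<^sup>* G H'"
      unfolding lc_orbit_def by auto
    then have "simple_graph H'" "fst H' = fst G" using orbit_simple[OF x(2) sG] by auto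
    then have "card (nbhd H' v) \<le> card (fst G)"
      using simple_nbhd simple_finite by (metis card_mono)
    then show "x \<in> {..card (fst G)}" using x unfolding degree_def by simp
  qed
  then have "finite ?D" by (rule finite_subset) simp
  moreover have "degree H w \<in> ?D" using assms(2,3) unfolding lc_orbit_def by blast
  ultimately show ?thesis unfolding min_orbit_degree_def by (rule Min_le)
qed

section \<open>Parity, support and zeros of a vertex subset\<close>

definition odd_adj :: "'a graph \<Rightarrow> 'a set \<Rightarrow> 'a \<Rightarrow> bool" where
  "odd_adj H K i \<longleftrightarrow> odd (card (nbhd H i \<inter> K))"

definition support :: "'a graph \<Rightarrow> 'a set \<Rightarrow> 'a set" where
  "support H K = {i \<in> fst H. i \<in> K \<or> odd_adj H K i}"

definition zeros :: "'a graph \<Rightarrow> 'a set \<Rightarrow> 'a set" where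
  "zeros H K = fst H - support H K"

lemma mem_zeros: "i \<in> zeros H K \<longleftrightarrow> i \<in> fst H \<and> i \<notin> K \<and> \<not> odd_adj H K i"
  unfolding zeros_def support_def by auto

lemma zeros_empty: "zeros H {} = fst H"
  unfolding zeros_def support_def odd_adj_def by auto

lemma zeros_del:
  assumes "L \<subseteq> fst H - {u}"
  shows "zeros (del u H) L = zeros H L - {u}"
proof -
  have "odd_adj (del u H) L i = odd_adj H L i" if "i \<noteq> u" for i
  proof -
    have "nbhd (del u H) i \<inter> L = nbhd H i \<inter> L" using that assms by (auto simp: nbhd_del)
    then show ?thesis unfolding odd_adj_def by simp
  qed
  then show ?thesis unfolding zeros_def support_def by auto
qed

lemma odd_card_remove:
  assumes "finite A"
  shows "odd (card (A - {x})) \<longleftrightarrow> (odd (card A) \<noteq> (x \<in> A))"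
proof (cases "x \<in> A")
  case True
  then have "card A = Suc (card (A - {x}))" using card.remove[OF assms] by blast
  then show ?thesis using True by simp
qed simp

lemma odd_card_sym_diff:
  assumes "finite A" "finite B"
  shows "odd (card (sym_diff A B)) \<longleftrightarrow> (odd (card A) \<noteq> odd (card B))"
proof -
  have "card (sym_diff A B) = card (A - B) + card (B - A)"
    by (rule card_Un_disjoint) (use assms in auto)
  moreover have "card A = card (A \<inter> B) + card (A - B)" "card B = card (A \<inter> B) + card (B - A)"
    using card_Int_Diff[OF assms(1), of B] card_Int_Diff[OF assms(2), of A] by (simp_all add: Int_commute)
  ultimately show ?thesis by presburger
qed

section \<open>The action of local complementation on vertex subsets\<close>

definition toggle :: "'a \<Rightarrow> 'a set \<Rightarrow> 'a set" where
  "toggle w K = (if w \<in> K then K - {w} else insert w K)"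

text \<open>Local complementation at \<open>w\<close> corresponds to the following map on subsets:
  \<open>w\<close> is toggled in \<open>K\<close> exactly when \<open>w\<close> has odd parity with respect to \<open>K\<close>.\<close>

definition lc_shift :: "'a graph \<Rightarrow> 'a \<Rightarrow> 'a set \<Rightarrow> 'a set" where
  "lc_shift H w K = (if odd_adj H K w then toggle w K else K)"

lemma mem_lc_shift: "i \<noteq> w \<Longrightarrow> i \<in> lc_shift H w K \<longleftrightarrow> i \<in> K"
  unfolding lc_shift_def toggle_def by auto

lemma mem_lc_shift_self: "w \<in> lc_shift H w K \<longleftrightarrow> ((w \<in> K) \<noteq> odd_adj H K w)"
  unfolding lc_shift_def toggle_def by auto

lemma odd_card_toggle:
  assumes "finite N"
  shows "odd (card (N \<inter> toggle w K)) \<longleftrightarrow> (odd (card (N \<inter> K)) \<noteq> (w \<in> N))"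
proof (cases "w \<in> N \<and> w \<in> K")
  case True
  then have "N \<inter> toggle w K = (N \<inter> K) - {w}" by (auto simp: toggle_def)
  then show ?thesis using True odd_card_remove[of "N \<inter> K" w] assms by simp
next
  case False
  then have "N \<inter> toggle w K = (if w \<in> N then insert w (N \<inter> K) else N \<inter> K)"
    by (auto simp: toggle_def)
  then show ?thesis using False assms by auto
qed

lemma odd_adj_lc_shift_self:
  assumes "simple_graph H"
  shows "odd_adj H (lc_shift H w K) w = odd_adj H K w"
  using odd_card_toggle[OF simple_finite_nbhd[OF assms], of w w K] simple_not_self[OF assms]
  unfolding lc_shift_def odd_adj_def by simp

lemma odd_adj_lc_self:
  assumes "simple_graph H"
  shows "odd_adj (lc w H) (lc_shift H w K) w = odd_adj H K w"
  using odd_adj_lc_shift_self[OF assms] nbhd_lc_self[OF assms] unfolding odd_adj_def by simp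

lemma odd_adj_lc_far:
  assumes "simple_graph H" "i \<notin> nbhd H w" "i \<noteq> w"
  shows "odd_adj (lc w H) (lc_shift H w K) i = odd_adj H K i"
proof -
  have "w \<notin> nbhd H i" using assms(2) nbhd_sym by metis
  then show ?thesis
    using assms odd_card_toggle[OF simple_finite_nbhd[OF assms(1)], of i w K]
    unfolding odd_adj_def lc_shift_def by (simp add: nbhd_lc)
qed

lemma odd_adj_lc_near:
  assumes sH: "simple_graph H" and i: "i \<in> nbhd H w"
  shows "odd_adj (lc w H) (lc_shift H w K) i = (odd_adj H K i \<noteq> (i \<in> K))"
proof -
  let ?A = "nbhd H i" and ?B = "nbhd H w - {i}" and ?K = "lc_shift H w K"
  have fin: "finite ?A" "finite (nbhd H w)" using simple_finite_nbhd[OF sH] by auto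
  have "nbhd (lc w H) i \<inter> ?K = sym_diff (?A \<inter> ?K) (?B \<inter> ?K)"
    using i by (auto simp: nbhd_lc)
  then have parity_split: "odd_adj (lc w H) ?K i = (odd (card (?A \<inter> ?K)) \<noteq> odd (card (?B \<inter> ?K)))"
    unfolding odd_adj_def using fin by (simp add: odd_card_sym_diff)
  have "w \<in> ?A" using i nbhd_sym by metis
  then have A: "odd (card (?A \<inter> ?K)) = (odd_adj H K i \<noteq> odd_adj H K w)"
    using odd_card_toggle[OF fin(1), of w K] unfolding lc_shift_def odd_adj_def by auto
  have "w \<notin> nbhd H w" "i \<noteq> w" using simple_not_self[OF sH] i by auto
  then have "?B \<inter> ?K = (nbhd H w \<inter> K) - {i}" unfolding lc_shift_def toggle_def by auto
  then have B: "odd (card (?B \<inter> ?K)) = (odd_adj H K w \<noteq> (i \<in> K))"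
    using odd_card_remove[of "nbhd H w \<inter> K" i] fin i unfolding odd_adj_def by auto
  show ?thesis using parity_split A B by auto
qed

lemma support_lc:
  assumes "simple_graph H"
  shows "support (lc w H) (lc_shift H w K) = support H K"
proof -
  have "(i \<in> lc_shift H w K \<or> odd_adj (lc w H) (lc_shift H w K) i) \<longleftrightarrow> (i \<in> K \<or> odd_adj H K i)" for i
  proof (cases "i = w")
    case True
    then show ?thesis using odd_adj_lc_self[OF assms] mem_lc_shift_self by metis
  next
    case False
    then show ?thesis
      using odd_adj_lc_near[OF assms] odd_adj_lc_far[OF assms _ False] mem_lc_shift[OF False]
      by (cases "i \<in> nbhd H w") auto
  qed
  then show ?thesis unfolding support_def by simp
qed

lemma zeros_lc:
  assumes "simple_graph H"
  shows "zeros (lc w H) (lc_shift H w K) = zeros H K"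
  unfolding zeros_def using support_lc[OF assms] by simp

text \<open>\<open>lc_shift H w\<close> is an involution, hence a bijection, of the subsets of \<open>V\<close>.\<close>

lemma lc_shift_bij:
  assumes "simple_graph H" "w \<in> fst H"
  shows "bij_betw (lc_shift H w) (Pow (fst H)) (Pow (fst H))"
proof -
  have "lc_shift H w (lc_shift H w K) = K" for K
    using odd_adj_lc_shift_self[OF assms(1), of w K]
    unfolding lc_shift_def toggle_def by auto
  moreover have "lc_shift H w K \<in> Pow (fst H)" if "K \<in> Pow (fst H)" for K
    using that assms(2) unfolding lc_shift_def toggle_def by auto
  ultimately show ?thesis
    by (intro bij_betw_byWitness[where f' = "lc_shift H w"]) auto
qed

lemma bij_betw_Pow_avoiding:
  assumes "bij_betw f (Pow V) (Pow V)"
  shows "bij_betw f {K \<in> Pow V. u \<notin> f K} (Pow (V - {u}))"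
proof (rule bij_betw_subset[OF assms])
  show "f ` {K \<in> Pow V. u \<notin> f K} = Pow (V - {u})"
    using bij_betw_imp_surj_on[OF assms] by blast
qed auto

section \<open>The state sum satisfies the recursion of the interlace polynomial\<close>

definition state_sum :: "'a graph \<Rightarrow> real" where
  "state_sum H = (\<Sum>K\<in>Pow (fst H). 3 ^ card (zeros H K))"

text \<open>Deleting \<open>u\<close> does not change parities of the remaining vertices with respect to
  subsets avoiding \<open>u\<close>.\<close>

lemma state_sum_del:
  assumes "fst H = V"
  shows "state_sum (del u H) = (\<Sum>L\<in>Pow (V - {u}). 3 ^ card (zeros H L - {u}))"
  unfolding state_sum_def fst_del assms
  by (rule sum.cong[OF refl]) (use zeros_del[of _ H u] assms in auto)

lemma state_sum_del_reindex:
  assumes "fst H = fst G" and bij: "bij_betw \<Phi> A (Pow (fst G - {u}))"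
    and zeros_eq: "\<And>K. K \<in> A \<Longrightarrow> zeros H (\<Phi> K) = zeros G K"
  shows "state_sum (del u H) = (\<Sum>K\<in>A. 3 ^ card (zeros G K - {u}))"
  unfolding state_sum_del[OF assms(1)]
  using sum.reindex_bij_betw[OF bij, of "\<lambda>L. (3::real) ^ card (zeros H L - {u})"]
  by (simp add: zeros_eq)

lemma elc_shift:
  assumes sG: "simple_graph G" and uv: "u \<noteq> v" "{u, v} \<in> snd G"
  defines "\<Phi> \<equiv> lc_shift (lc v (lc u G)) u \<circ> lc_shift (lc u G) v \<circ> lc_shift G u"
  shows "bij_betw \<Phi> {K \<in> Pow (fst G). \<not> odd_adj G K u} (Pow (fst G - {u}))"
    and "zeros (elc u v G) (\<Phi> K) = zeros G K"
proof -
  let ?G1 = "lc u G" and ?G2 = "lc v (lc u G)"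
  have uV: "u \<in> fst G" and vV: "v \<in> fst G" using sG uv unfolding simple_graph_def by auto
  have s1: "simple_graph ?G1" and s2: "simple_graph ?G2" using sG by (auto intro: simple_lc)
  show "zeros (elc u v G) (\<Phi> K) = zeros G K"
    unfolding elc_def \<Phi>_def using zeros_lc[OF s2] zeros_lc[OF s1] zeros_lc[OF sG] by simp
  have mem: "u \<in> \<Phi> K \<longleftrightarrow> odd_adj G K u" for K
  proof -
    let ?K1 = "lc_shift G u K" and ?K2 = "lc_shift ?G1 v (lc_shift G u K)"
    have "u \<in> nbhd G v" using uv(2) unfolding nbhd_def by simp
    then have "u \<in> nbhd ?G1 v" using nbhd_lc_self[OF sG, of u] nbhd_sym by metis
    then have "odd_adj ?G2 ?K2 u = (odd_adj ?G1 ?K1 u \<noteq> (u \<in> ?K1))"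
      by (rule odd_adj_lc_near[OF s1])
    moreover have "u \<in> ?K2 \<longleftrightarrow> u \<in> ?K1" using mem_lc_shift uv(1) by metis
    ultimately show ?thesis
      using mem_lc_shift_self[of u ?G2 ?K2] mem_lc_shift_self[of u G K] odd_adj_lc_self[OF sG]
      unfolding \<Phi>_def by auto
  qed
  have "bij_betw \<Phi> (Pow (fst G)) (Pow (fst G))"
    unfolding \<Phi>_def using lc_shift_bij[OF sG uV] lc_shift_bij[OF s1, of v] lc_shift_bij[OF s2, of u]
      uV vV by (auto intro!: bij_betw_trans)
  from bij_betw_Pow_avoiding[OF this, of u]
  show "bij_betw \<Phi> {K \<in> Pow (fst G). \<not> odd_adj G K u} (Pow (fst G - {u}))"
    by (simp add: mem)
qed

lemma lc_shift_del:
  assumes "simple_graph G" "u \<in> fst G"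
  shows "bij_betw (lc_shift G u) {K \<in> Pow (fst G). (u \<in> K) = odd_adj G K u} (Pow (fst G - {u}))"
  using bij_betw_Pow_avoiding[OF lc_shift_bij[OF assms], of u] by (simp add: mem_lc_shift_self)

text \<open>Each subset \<open>K\<close> is counted by the three terms with total weight
  \<open>3 ^ #zeros(K)\<close>: a zero \<open>u\<close> is counted three times, otherwise \<open>K\<close> is counted once.\<close>

lemma three_pow_zeros_split:
  fixes K :: "'a set"
  assumes "finite (fst G)" "u \<in> fst G"
  defines "g \<equiv> (3::real) ^ card (zeros G K - {u})"
  shows "3 ^ card (zeros G K) =
    (if u \<notin> K then g else 0) + (if \<not> odd_adj G K u then g else 0) + (if (u \<in> K) = odd_adj G K u then g else 0)"
proof (cases "u \<in> zeros G K")
  case True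
  have "finite (zeros G K)" using assms(1) unfolding zeros_def by simp
  then have "card (zeros G K) = Suc (card (zeros G K - {u}))" using True by (rule card.remove)
  moreover have "u \<notin> K" "\<not> odd_adj G K u" using True by (simp_all add: mem_zeros)
  ultimately show ?thesis unfolding g_def by auto
next
  case False
  then have "zeros G K - {u} = zeros G K" by simp
  moreover have "u \<in> K \<or> odd_adj G K u" using False assms(2) by (simp add: mem_zeros)
  ultimately show ?thesis unfolding g_def by auto
qed

lemma state_sum_rec:
  assumes sG: "simple_graph G" and uv: "u \<noteq> v" "{u, v} \<in> snd G"
  shows "state_sum G = state_sum (del u G) + state_sum (del u (elc u v G)) + state_sum (del u (lc u G))"
proof -
  let ?V = "fst G"
  define g where "g K = (3::real) ^ card (zeros G K - {u})" for K
  have uV: "u \<in> ?V" using sG uv unfolding simple_graph_def by auto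
  have fP: "finite (Pow ?V)" using simple_finite[OF sG] by simp
  have "Pow (?V - {u}) = {K \<in> Pow ?V. u \<notin> K}" by auto
  then have T1: "state_sum (del u G) = (\<Sum>K\<in>{K \<in> Pow ?V. u \<notin> K}. g K)"
    unfolding state_sum_del[OF refl] g_def by simp
  have T2: "state_sum (del u (elc u v G)) = (\<Sum>K\<in>{K \<in> Pow ?V. \<not> odd_adj G K u}. g K)"
    unfolding g_def by (rule state_sum_del_reindex[OF fst_elc elc_shift[OF sG uv]])
  have T3: "state_sum (del u (lc u G)) = (\<Sum>K\<in>{K \<in> Pow ?V. (u \<in> K) = odd_adj G K u}. g K)"
    unfolding g_def by (rule state_sum_del_reindex[OF fst_lc lc_shift_del[OF sG uV] zeros_lc[OF sG]])
  have "state_sum G = (\<Sum>K\<in>Pow ?V. (if u \<notin> K then g K else 0) + (if \<not> odd_adj G K u then g K else 0)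
        + (if (u \<in> K) = odd_adj G K u then g K else 0))"
    unfolding state_sum_def g_def using three_pow_zeros_split[OF simple_finite[OF sG] uV] by simp
  also have "\<dots> = state_sum (del u G) + state_sum (del u (elc u v G)) + state_sum (del u (lc u G))"
    unfolding T1 T2 T3 by (simp only: sum.distrib sum.inter_filter[OF fP])
  finally show ?thesis .
qed

lemma sum_Pow_card:
  fixes h :: "nat \<Rightarrow> real"
  assumes fV: "finite V"
  shows "(\<Sum>K\<in>Pow V. h (card K)) = (\<Sum>k\<le>card V. of_nat (card V choose k) * h k)"
proof -
  have "(\<Sum>K\<in>Pow V. h (card K)) = (\<Sum>k\<le>card V. \<Sum>K\<in>{K \<in> Pow V. card K = k}. h (card K))"
    by (rule sum.group[symmetric]) (use fV in \<open>auto intro: card_mono\<close>)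
  also have "\<dots> = (\<Sum>k\<le>card V. of_nat (card V choose k) * h k)"
  proof (rule sum.cong[OF refl])
    fix k
    have "{K \<in> Pow V. card K = k} = {B. B \<subseteq> V \<and> card B = k}" by auto
    then have "card {K \<in> Pow V. card K = k} = card V choose k" using n_subsets[OF fV] by simp
    then show "(\<Sum>K\<in>{K \<in> Pow V. card K = k}. h (card K)) = of_nat (card V choose k) * h k"
      by simp
  qed
  finally show ?thesis .
qed

lemma sum_Pow_two_pow:
  assumes "finite V"
  shows "(\<Sum>U\<in>Pow V. (2::real) ^ card U) = 3 ^ card V"
  using sum_Pow_card[OF assms, of "\<lambda>k. 2 ^ k"] binomial_ring[of "2::real" 1 "card V"]
  by (simp add: mult.assoc)

lemma state_sum_edgeless:
  assumes sG: "simple_graph G" and "snd G = {}"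
  shows "state_sum G = 4 ^ card (fst G)"
proof -
  let ?V = "fst G" and ?n = "card (fst G)"
  have fV: "finite ?V" using simple_finite[OF sG] .
  have "zeros G K = ?V - K" for K
    using assms(2) unfolding zeros_def support_def odd_adj_def nbhd_def by auto
  then have "state_sum G = (\<Sum>K\<in>Pow ?V. (\<lambda>k. (3::real) ^ (?n - k)) (card K))"
    unfolding state_sum_def using fV by (intro sum.cong) (auto simp: card_Diff_subset finite_subset)
  also have "\<dots> = (\<Sum>k\<le>?n. of_nat (?n choose k) * 1 ^ k * 3 ^ (?n - k))"
    using sum_Pow_card[OF fV] by simp
  also have "\<dots> = (1 + 3) ^ ?n" by (rule binomial_ring[symmetric])
  finally show ?thesis by simp
qed

lemma chosen_edge:
  assumes "simple_graph G" "snd G \<noteq> {}"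
  obtains u v where "(SOME (u, v). u \<noteq> v \<and> {u, v} \<in> snd G) = (u, v)" "u \<noteq> v" "{u, v} \<in> snd G"
proof -
  obtain e where e: "e \<in> snd G" using assms(2) by auto
  then have "card e = 2" using assms(1) unfolding simple_graph_def by auto
  then obtain a b where "e = {a, b}" "a \<noteq> b" by (meson card_2_iff)
  then have "\<exists>p. (case p of (u, v) \<Rightarrow> u \<noteq> v \<and> {u, v} \<in> snd G)"
    using e by (intro exI[of _ "(a, b)"]) auto
  from someI_ex[OF this] show ?thesis
    by (cases "SOME (u, v). u \<noteq> v \<and> {u, v} \<in> snd G") (auto intro: that)
qed

lemma Qf_state_sum:
  "simple_graph G \<Longrightarrow> card (fst G) = m \<Longrightarrow> poly (Qf m G) 4 = state_sum G"
proof (induction m arbitrary: G)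
  case 0
  then have "fst G = {}" using simple_finite[OF 0(1)] by simp
  then have "snd G = {}" using 0 unfolding simple_graph_def by fastforce
  then show ?case using state_sum_edgeless[OF 0(1)] 0(2) by simp
next
  case (Suc m)
  note sG = Suc.prems(1)
  show ?case
  proof (cases "snd G = {}")
    case True
    then show ?thesis using state_sum_edgeless[OF sG] Suc.prems(2) by simp
  next
    case False
    then obtain u v where chosen: "(SOME (u, v). u \<noteq> v \<and> {u, v} \<in> snd G) = (u, v)"
      and uv: "u \<noteq> v" "{u, v} \<in> snd G"
      using chosen_edge[OF sG] by blast
    have "u \<in> fst G" using sG uv unfolding simple_graph_def by auto
    then have m: "card (fst G - {u}) = m" using Suc.prems(2) simple_finite[OF sG] by simp
    have "poly (Qf (Suc m) G) 4 = poly (Qf m (del u G)) 4 + poly (Qf m (del u (elc u v G))) 4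
          + poly (Qf m (del u (lc u G))) 4"
      using False chosen by simp
    also have "\<dots> = state_sum (del u G) + state_sum (del u (elc u v G)) + state_sum (del u (lc u G))"
      using Suc.IH[OF simple_del[OF sG]] Suc.IH[OF simple_del[OF simple_elc[OF sG]]]
        Suc.IH[OF simple_del[OF simple_lc[OF sG]]] m by simp
    also have "\<dots> = state_sum G" using state_sum_rec[OF sG uv] by simp
    finally show ?thesis .
  qed
qed

lemma interlace_state_sum: "simple_graph G \<Longrightarrow> poly (interlace G) 4 = state_sum G"
  unfolding interlace_def using Qf_state_sum by blast

section \<open>Nonempty subsets have large support\<close>

lemma degree_le_support:
  assumes sG: "simple_graph G" and w: "w \<in> K" "w \<in> fst G" and nb: "nbhd G w \<subseteq> support G K"
  shows "degree G w + 1 \<le> card (support G K)"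
proof -
  have fin: "finite (support G K)" using simple_finite[OF sG] unfolding support_def by auto
  have "insert w (nbhd G w) \<subseteq> support G K" using nb w unfolding support_def by auto
  then have "card (insert w (nbhd G w)) \<le> card (support G K)" using fin by (rule card_mono[rotated])
  then show ?thesis
    using simple_not_self[OF sG, of w] simple_finite_nbhd[OF sG, of w] unfolding degree_def by simp
qed

text \<open>If \<open>w \<in> K\<close> has odd parity, local complementation at \<open>w\<close> replaces \<open>K\<close> by the
  smaller set \<open>K - {w}\<close> with the same support.\<close>

lemma lc_shift_odd_member:
  assumes "w \<in> K" "odd_adj H K w"
  shows "lc_shift H w K = K - {w}"
  using assms unfolding lc_shift_def toggle_def by simp

lemma lc_outside_support:
  assumes sG: "simple_graph G" and "w \<in> K" "\<not> odd_adj G K w"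
    and u: "u \<in> nbhd G w" "u \<notin> support G K"
  shows "support (lc u G) K = support G K" "odd_adj (lc u G) K w"
proof -
  have "u \<in> fst G" using u(1) simple_nbhd[OF sG] by auto
  then have "\<not> odd_adj G K u" using u(2) unfolding support_def by auto
  then have fix_K: "lc_shift G u K = K" unfolding lc_shift_def by simp
  show "support (lc u G) K = support G K" using support_lc[OF sG, of u K] fix_K by simp
  have "w \<in> nbhd G u" using u(1) nbhd_sym by metis
  then show "odd_adj (lc u G) K w"
    using odd_adj_lc_near[OF sG, of w u K] fix_K assms(2,3) by simp
qed

lemma support_ge_orbit_degree:
  "simple_graph G \<Longrightarrow> K \<subseteq> fst G \<Longrightarrow> K \<noteq> {} \<Longrightarrow>
   \<exists>H w. lc_step\<^sup>*\<^sup>* G H \<and> w \<in> fst H \<and> degree H w + 1 \<le> card (support G K)"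
proof (induction "card K" arbitrary: G K rule: less_induct)
  case less
  note sG = less.prems(1) and KV = less.prems(2)
  obtain w where wK: "w \<in> K" using less.prems(3) by auto
  have wV: "w \<in> fst G" using wK KV by auto
  have fK: "finite K" using KV simple_finite[OF sG] finite_subset by blast
  text \<open>Whenever \<open>w\<close> is odd in a graph \<open>G'\<close> of the orbit with the same support, remove
    \<open>w\<close> from \<open>K\<close> by local complementation at \<open>w\<close> and use the induction hypothesis.\<close>
  have odd_case: "\<exists>H w. lc_step\<^sup>*\<^sup>* G H \<and> w \<in> fst H \<and> degree H w + 1 \<le> card (support G K)"
    if G': "lc_step\<^sup>*\<^sup>* G G'" "simple_graph G'" "fst G' = fst G"
      "support G' K = support G K" "odd_adj G' K w" for G'
  proof -
    have K': "lc_shift G' w K = K - {w}" by (rule lc_shift_odd_member[OF wK G'(5)])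
    have "K \<noteq> {w}"
      using G'(5) simple_not_self[OF G'(2), of w] unfolding odd_adj_def by auto
    then have "K - {w} \<noteq> {}" using wK by auto
    moreover have "card (K - {w}) < card K" using card_Diff1_less[OF fK wK] .
    moreover have "K - {w} \<subseteq> fst (lc w G')" using KV G'(3) by auto
    ultimately obtain H v where Hv: "lc_step\<^sup>*\<^sup>* (lc w G') H" "v \<in> fst H"
      "degree H v + 1 \<le> card (support (lc w G') (K - {w}))"
      using less.hyps simple_lc[OF G'(2)] by blast
    have "support (lc w G') (K - {w}) = support G K" using support_lc[OF G'(2)] K' G'(4) by metis
    moreover have "lc_step G' (lc w G')" unfolding lc_step_def using wV G'(3) by auto
    then have "lc_step\<^sup>*\<^sup>* G H" using G'(1) Hv(1) by (meson rtranclp.rtrancl_into_rtrancl rtranclp_trans)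
    ultimately show ?thesis using Hv(2,3) by (intro exI[of _ H] exI[of _ v]) simp
  qed
  show ?case
  proof (cases "nbhd G w \<subseteq> support G K")
    case True
    then show ?thesis using degree_le_support[OF sG wK wV] wV by blast
  next
    case False
    then obtain u where u: "u \<in> nbhd G w" "u \<notin> support G K" by auto
    have "u \<in> fst G" using u(1) simple_nbhd[OF sG] by auto
    then have "lc_step\<^sup>*\<^sup>* G (lc u G)" unfolding lc_step_def by auto
    then show ?thesis
      using odd_case[of G] odd_case[of "lc u G"] lc_outside_support[OF sG wK _ u] sG simple_lc[OF sG]
      by (cases "odd_adj G K w") auto
  qed
qed

section \<open>Counting\<close>

lemma sum_disjoint_pairs:
  fixes f :: "'a set \<Rightarrow> 'a set \<Rightarrow> real"
  assumes fV: "finite V"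
  shows "(\<Sum>K\<in>Pow V. \<Sum>U\<in>Pow (V - K). f K U) = (\<Sum>S\<in>Pow V. \<Sum>K\<in>Pow S. f K (S - K))"
proof -
  have disjoint_diff: "U - K = U" if "U \<subseteq> V - K" for K U :: "'a set"
    using that by auto
  have "(\<Sum>K\<in>Pow V. \<Sum>U\<in>Pow (V - K). f K U) = (\<Sum>(K, U)\<in>Sigma (Pow V) (\<lambda>K. Pow (V - K)). f K U)"
    by (rule sum.Sigma) (use fV in auto)
  also have "\<dots> = (\<Sum>(S, K)\<in>Sigma (Pow V) Pow. f K (S - K))"
    by (rule sum.reindex_bij_witness[where i = "\<lambda>(S, K). (K, S - K)" and j = "\<lambda>(K, U). (K \<union> U, K)"])
      (auto simp: Un_Diff disjoint_diff)
  also have "\<dots> = (\<Sum>S\<in>Pow V. \<Sum>K\<in>Pow S. f K (S - K))"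
    by (rule sum.Sigma[symmetric]) (use fV in \<open>auto intro: finite_subset\<close>)
  finally show ?thesis .
qed

lemma state_sum_expand:
  assumes sG: "simple_graph G"
  shows "state_sum G = (\<Sum>S\<in>Pow (fst G). \<Sum>K\<in>Pow S.
            if S - K \<subseteq> zeros G K then (2::real) ^ card (S - K) else 0)"
proof -
  have fV: "finite (fst G)" using simple_finite[OF sG] .
  have "3 ^ card (zeros G K) = (\<Sum>U\<in>Pow (fst G - K). if U \<subseteq> zeros G K then (2::real) ^ card U else 0)"
    for K
  proof -
    have ZV: "zeros G K \<subseteq> fst G - K" by (auto simp: mem_zeros)
    then have "{U \<in> Pow (fst G - K). U \<subseteq> zeros G K} = Pow (zeros G K)" by auto
    then have "(\<Sum>U\<in>Pow (fst G - K). if U \<subseteq> zeros G K then (2::real) ^ card U else 0)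
        = (\<Sum>U\<in>Pow (zeros G K). 2 ^ card U)"
      using fV by (simp add: sum.inter_filter[symmetric])
    also have "\<dots> = 3 ^ card (zeros G K)"
      using fV ZV by (intro sum_Pow_two_pow) (auto intro: finite_subset)
    finally show ?thesis by simp
  qed
  then show ?thesis unfolding state_sum_def by (simp add: sum_disjoint_pairs[OF fV])
qed

text \<open>The summand of \<open>\<gamma>(d)/2^n\<close> for \<open>|S| = t\<close>, \<open>|K| = k\<close>.\<close>

definition gamma_weight :: "nat \<Rightarrow> nat \<Rightarrow> nat \<Rightarrow> nat \<Rightarrow> real" where
  "gamma_weight n d t k = (if max 1 (d + t - n) \<le> k then 2 ^ (t - k) else 0)"

lemma gamma_div_pow:
  "gamma n d / 2 ^ n = (\<Sum>t\<le>n. of_nat (n choose t) * (\<Sum>k\<le>t. of_nat (t choose k) * gamma_weight n d t k))"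
  unfolding gamma_def atLeast0AtMost sum_divide_distrib
proof (rule sum.cong[OF refl])
  fix t assume "t \<in> {..n}"
  let ?m = "max 1 (d + t - n)"
  have "(\<Sum>k\<le>t. of_nat (t choose k) * gamma_weight n d t k)
      = (\<Sum>k\<le>t. if ?m \<le> k then of_nat (t choose k) * 2 ^ (t - k) else 0)"
    by (rule sum.cong) (simp_all add: gamma_weight_def)
  also have "\<dots> = (\<Sum>k=?m..t. of_nat (t choose k) * 2 ^ (t - k))"
    by (simp add: sum.inter_filter[symmetric]) (rule sum.cong; auto)
  finally have weights: "(\<Sum>k\<le>t. of_nat (t choose k) * gamma_weight n d t k)
      = (\<Sum>k=?m..t. of_nat (t choose k) * 2 ^ (t - k))" .
  have "(2::real) ^ t * 2 ^ (n - k) = 2 ^ n * 2 ^ (t - k)" if "k \<le> t" for k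
    using that \<open>t \<in> {..n}\<close> by (simp add: power_add[symmetric])
  then have "2 ^ t * (\<Sum>k=?m..t. real (t choose k) * 2 ^ (n - k))
      = 2 ^ n * (\<Sum>k=?m..t. of_nat (t choose k) * 2 ^ (t - k))"
    unfolding sum_distrib_left by (intro sum.cong) (auto simp: algebra_simps)
  then show "real (n choose t) * 2 ^ t * (\<Sum>k = ?m..t. real (t choose k) * 2 ^ (n - k)) / 2 ^ n =
        of_nat (n choose t) * (\<Sum>k\<le>t. of_nat (t choose k) * gamma_weight n d t k)"
    unfolding weights by (simp add: mult.assoc)
qed

text \<open>Termwise bound: the term for \<open>K \<noteq> {}\<close> vanishes unless \<open>|S - K| \<le> n - \<delta> - 1\<close>,
  by the support bound of part (2).\<close>

lemma term_bound:
  assumes sG: "simple_graph G" and S: "S \<subseteq> fst G" and K: "K \<subseteq> S"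
  shows "(if S - K \<subseteq> zeros G K then (2::real) ^ card (S - K) else 0)
         \<le> (if K = {} then 2 ^ card S else 0)
            + gamma_weight (card (fst G)) (min_orbit_degree G + 1) (card S) (card K)"
proof (cases "K \<noteq> {} \<and> S - K \<subseteq> zeros G K")
  case True
  have fV: "finite (fst G)" using simple_finite[OF sG] .
  have KV: "K \<subseteq> fst G" using K S by auto
  obtain H w where "lc_step\<^sup>*\<^sup>* G H" "w \<in> fst H" "degree H w + 1 \<le> card (support G K)"
    using support_ge_orbit_degree[OF sG KV] True by blast
  then have d: "min_orbit_degree G + 1 \<le> card (support G K)"
    using min_orbit_degree_le[OF sG] by fastforce
  have sV: "support G K \<subseteq> fst G" unfolding support_def by auto
  have "card (zeros G K) = card (fst G) - card (support G K)"
    unfolding zeros_def using sV fV by (simp add: card_Diff_subset finite_subset)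
  moreover have "card (S - K) \<le> card (zeros G K)"
    using True fV by (intro card_mono) (auto simp: zeros_def)
  moreover have "card (S - K) = card S - card K"
    using K S fV by (meson card_Diff_subset finite_subset)
  moreover have "card K \<le> card S" "card S \<le> card (fst G)" "card (support G K) \<le> card (fst G)"
    using K S sV fV by (auto intro: card_mono finite_subset)
  moreover have "card K \<ge> 1" using True KV fV
    by (metis card_0_eq finite_subset less_one not_le)
  ultimately have "max 1 (min_orbit_degree G + 1 + card S - card (fst G)) \<le> card K"
    using d by linarith
  then show ?thesis using True \<open>card (S - K) = card S - card K\<close> unfolding gamma_weight_def by simp
next
  case False
  then show ?thesis using S zeros_empty[of G] unfolding gamma_weight_def by auto
qed

lemma state_sum_bound:
  assumes sG: "simple_graph G"
  shows "state_sum G \<le> 3 ^ card (fst G) + gamma (card (fst G)) (min_orbit_degree G + 1) / 2 ^ card (fst G)"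
proof -
  let ?V = "fst G" and ?n = "card (fst G)"
  let ?w = "gamma_weight ?n (min_orbit_degree G + 1)"
  have fV: "finite ?V" using simple_finite[OF sG] .
  have "state_sum G \<le> (\<Sum>S\<in>Pow ?V. \<Sum>K\<in>Pow S. (if K = {} then 2 ^ card S else 0) + ?w (card S) (card K))"
    unfolding state_sum_expand[OF sG] by (intro sum_mono term_bound[OF sG]) auto
  also have "\<dots> = (\<Sum>S\<in>Pow ?V. 2 ^ card S + (\<Sum>k\<le>card S. of_nat (card S choose k) * ?w (card S) k))"
  proof (rule sum.cong[OF refl])
    fix S assume "S \<in> Pow ?V"
    then have "finite S" using fV finite_subset by blast
    then show "(\<Sum>K\<in>Pow S. (if K = {} then 2 ^ card S else 0) + ?w (card S) (card K)) =
          2 ^ card S + (\<Sum>k\<le>card S. of_nat (card S choose k) * ?w (card S) k)"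
      using sum_Pow_card[of S "?w (card S)"] by (simp add: sum.distrib)
  qed
  also have "\<dots> = 3 ^ ?n + gamma ?n (min_orbit_degree G + 1) / 2 ^ ?n"
    using sum_Pow_two_pow[OF fV] sum_Pow_card[OF fV, of "\<lambda>t. \<Sum>k\<le>t. of_nat (t choose k) * ?w t k"]
    by (simp add: sum.distrib gamma_div_pow)
  finally show ?thesis .
qed

theorem theorem1:
  fixes G :: "'a graph" and n :: nat
  assumes "simple_graph G"
    and "n = card (fst G)"
  shows "poly (interlace G) 4
           \<le> (gamma n (min_orbit_degree G + 1) + 6 ^ n) / 2 ^ n"
proof -
  have "(6::real) ^ n = 3 ^ n * 2 ^ n" by (simp add: power_mult_distrib[symmetric])
  then have "(gamma n (min_orbit_degree G + 1) + 6 ^ n) / 2 ^ n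
      = 3 ^ n + gamma n (min_orbit_degree G + 1) / 2 ^ n"
    by (simp add: field_simps)
  then show ?thesis
    using interlace_state_sum[OF assms(1)] state_sum_bound[OF assms(1)] assms(2) by simp
qed

end
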